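(* Let $G$ be a finite connected graph with chromatic number $\chi$, let $c$ be a nice $\chi$-coloring of $G$, and let $(V^c_1,\dots,V^c_k)$ be the level partition of $D_c$. Let $B_c$ be the set of vertices $x$ of $G$ such that there is no colorful path (with respect to $c$) starting at $x$. Then $B_c\subseteq V^c_2\cup V^c_3\cup\dots\cup V^c_{\chi-1}$.
   Context: A proper $\chi$-coloring is a map $c:V(G)\to\{1,\dots,\chi\}$ with adjacent vertices receiving different colors; colors are considered modulo $\chi$. A colorful path is a path on $\chi$ distinct vertices of $G$ whose colors are pairwise distinct. $D_c$ is the oriented graph on $V(G)$ with an arc $ab$ if and only if $\{a,b\}\in E(G)$ and $c(b)\equiv c(a)+1\pmod{\chi}$. The coloring $c$ is nice if $D_c$ is acyclic and has exactly one sink (vertex of out-degree $0$). For an acyclic oriented graph $D$, the level partition is the unique partition $(V_1,\dots,V_k)$ of $V(D)$ such that $V_i$ is the set of sinks of the subdigraph of $D$ induced on $V(D)\setminus(V_1\cup\dots\cup V_{i-1})$. *)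

theory Defs
  imports Main
begin

definition graph :: "'a set \<Rightarrow> ('a \<Rightarrow> 'a \<Rightarrow> bool) \<Rightarrow> bool" where
  "graph V E \<longleftrightarrow> finite V \<and> (\<forall>u v. E u v \<longrightarrow> u \<in> V \<and> v \<in> V)
     \<and> (\<forall>u v. E u v \<longrightarrow> E v u) \<and> (\<forall>u. \<not> E u u)"

definition connected_graph :: "'a set \<Rightarrow> ('a \<Rightarrow> 'a \<Rightarrow> bool) \<Rightarrow> bool" where
  "connected_graph V E \<longleftrightarrow> graph V E \<and> V \<noteq> {} \<and> (\<forall>u\<in>V. \<forall>v\<in>V. E\<^sup>*\<^sup>* u v)"

definition proper_coloring :: "'a set \<Rightarrow> ('a \<Rightarrow> 'a \<Rightarrow> bool) \<Rightarrow> nat \<Rightarrow> ('a \<Rightarrow> nat) \<Rightarrow> bool" where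
  "proper_coloring V E k c \<longleftrightarrow> (\<forall>v\<in>V. c v \<in> {1..k}) \<and> (\<forall>u v. E u v \<longrightarrow> c u \<noteq> c v)"

definition chromatic_number :: "'a set \<Rightarrow> ('a \<Rightarrow> 'a \<Rightarrow> bool) \<Rightarrow> nat" where
  "chromatic_number V E = (LEAST k. \<exists>c. proper_coloring V E k c)"

definition colorful_path_from ::
  "'a set \<Rightarrow> ('a \<Rightarrow> 'a \<Rightarrow> bool) \<Rightarrow> nat \<Rightarrow> ('a \<Rightarrow> nat) \<Rightarrow> 'a \<Rightarrow> 'a list \<Rightarrow> bool" where
  "colorful_path_from V E \<chi> c x p \<longleftrightarrow>
     length p = \<chi> \<and> distinct p \<and> set p \<subseteq> V \<and> p \<noteq> [] \<and> hd p = x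
     \<and> (\<forall>i. Suc i < length p \<longrightarrow> E (p ! i) (p ! Suc i))
     \<and> distinct (map c p)"

definition Dc_arc :: "('a \<Rightarrow> 'a \<Rightarrow> bool) \<Rightarrow> nat \<Rightarrow> ('a \<Rightarrow> nat) \<Rightarrow> 'a \<Rightarrow> 'a \<Rightarrow> bool" where
  "Dc_arc E \<chi> c a b \<longleftrightarrow> E a b \<and> c b mod \<chi> = (c a + 1) mod \<chi>"

definition sinks_in :: "('a \<Rightarrow> 'a \<Rightarrow> bool) \<Rightarrow> 'a set \<Rightarrow> 'a set" where
  "sinks_in A S = {v \<in> S. \<not> (\<exists>w\<in>S. A v w)}"

definition nice_coloring :: "'a set \<Rightarrow> ('a \<Rightarrow> 'a \<Rightarrow> bool) \<Rightarrow> nat \<Rightarrow> ('a \<Rightarrow> nat) \<Rightarrow> bool" where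
  "nice_coloring V E \<chi> c \<longleftrightarrow> proper_coloring V E \<chi> c
     \<and> acyclic {(a, b). a \<in> V \<and> b \<in> V \<and> Dc_arc E \<chi> c a b}
     \<and> card (sinks_in (Dc_arc E \<chi> c) V) = 1"

text \<open>Level partition: remaining A V i = V minus V_1 .. V_i; level A V i = V_i (i \<ge> 1).
  Levels beyond the last nonempty one are empty.\<close>
fun remaining :: "('a \<Rightarrow> 'a \<Rightarrow> bool) \<Rightarrow> 'a set \<Rightarrow> nat \<Rightarrow> 'a set" where
  "remaining A V 0 = V"
| "remaining A V (Suc i) = remaining A V i - sinks_in A (remaining A V i)"

definition level :: "('a \<Rightarrow> 'a \<Rightarrow> bool) \<Rightarrow> 'a set \<Rightarrow> nat \<Rightarrow> 'a set" where
  "level A V i = sinks_in A (remaining A V (i - 1))"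

end

theory Submission
  imports Defs "HOL-Number_Theory.Cong"
begin

text \<open>
  In the acyclic digraph \<open>D\<^sub>c\<close> every vertex of level \<open>i > 1\<close> has an arc into level \<open>i - 1\<close>, so
  each vertex of level \<open>i\<close> starts a directed walk through levels \<open>i, i - 1, \<dots>, 1\<close>. Along an arc
  the colour grows by one modulo \<open>\<chi>\<close>, hence any \<open>\<chi>\<close> consecutive vertices of such a walk carry
  pairwise distinct colours and form a colorful path. This settles vertices of level at least
  \<open>\<chi>\<close>. For the unique sink \<open>x\<close>, which forms level 1, minimality of \<open>\<chi>\<close> yields a path with
  colours \<open>1, 2, \<dots>, \<chi>\<close>; its first vertex lies in level at least \<open>\<chi>\<close>, and reversing the last
  \<open>\<chi>\<close> vertices of the walk from it down to \<open>x\<close> gives a colorful path starting at \<open>x\<close>.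
\<close>

lemma remaining_subset: "remaining A V n \<subseteq> V"
  by (induction n) auto

lemma antimono_remaining: "antimono (remaining A V)"
  unfolding antimono_iff_le_Suc by auto

lemma level_subset: "level A V i \<subseteq> V"
  using remaining_subset by (fastforce simp: level_def sinks_in_def)

lemma level_Suc: "level A V (Suc k) = remaining A V k - remaining A V (Suc k)"
  by (auto simp: level_def sinks_in_def)

lemma sinks_in_nonempty:
  assumes "finite V" "acyclic {(a, b). a \<in> V \<and> b \<in> V \<and> A a b}" "S \<subseteq> V" "S \<noteq> {}"
  shows "sinks_in A S \<noteq> {}"
proof -
  let ?R = "{(a, b). a \<in> V \<and> b \<in> V \<and> A a b}"
  have "?R \<subseteq> V \<times> V"
    by auto
  then have "finite ?R"
    using assms(1) by (simp add: finite_subset)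
  then have "wf (?R\<inverse>)"
    using assms(2) by (rule finite_acyclic_wf_converse)
  then obtain x where "x \<in> S" and "\<And>y. (y, x) \<in> ?R\<inverse> \<Longrightarrow> y \<notin> S"
    using assms(4) by (rule wfE_min') blast
  then have "x \<in> sinks_in A S"
    using assms(3) by (auto simp: sinks_in_def)
  then show ?thesis by auto
qed

lemma card_remaining:
  assumes "finite V" "acyclic {(a, b). a \<in> V \<and> b \<in> V \<and> A a b}" "remaining A V n \<noteq> {}"
  shows "card (remaining A V n) + n \<le> card V"
  using assms(3)
proof (induction n)
  case (Suc n)
  have "remaining A V n \<noteq> {}"
    using Suc.prems by auto
  then have "sinks_in A (remaining A V n) \<noteq> {}" and "card (remaining A V n) + n \<le> card V"
    using sinks_in_nonempty[OF assms(1,2) remaining_subset] Suc.IH by auto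
  moreover have "finite (remaining A V n)"
    using assms(1) remaining_subset finite_subset by metis
  ultimately have "card (remaining A V (Suc n)) < card (remaining A V n)"
    by (intro psubset_card_mono) (auto simp: sinks_in_def)
  then show ?case
    using \<open>card (remaining A V n) + n \<le> card V\<close> by simp
qed simp

lemma remaining_card_eq_empty:
  assumes "finite V" "acyclic {(a, b). a \<in> V \<and> b \<in> V \<and> A a b}"
  shows "remaining A V (card V) = {}"
proof (rule ccontr)
  assume nonempty: "remaining A V (card V) \<noteq> {}"
  then have "card (remaining A V (card V)) > 0"
    using assms(1) remaining_subset finite_subset by (metis card_gt_0_iff)
  then show False
    using card_remaining[OF assms nonempty] by linarith
qed

lemma level_above_if_leaves_remaining:
  assumes "v \<in> remaining A V m" "v \<notin> remaining A V n"
  shows "\<exists>i>m. v \<in> level A V i"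
  using assms(2)
proof (induction n)
  case 0
  then show ?case
    using assms(1) remaining_subset[of A V m] by auto
next
  case (Suc n)
  show ?case
  proof (cases "v \<in> remaining A V n")
    case True
    have "m \<le> n"
      using assms(1) Suc.prems antimonoD[OF antimono_remaining, of "Suc n" m A V]
      by (metis not_less_eq_eq subsetD)
    moreover have "v \<in> level A V (Suc n)"
      using True Suc.prems level_Suc[of A V n] by blast
    ultimately show ?thesis
      using le_imp_less_Suc by blast
  qed (use Suc.IH in blast)
qed

lemma level_above_if_remaining:
  assumes "finite V" "acyclic {(a, b). a \<in> V \<and> b \<in> V \<and> A a b}" "v \<in> remaining A V m"
  shows "\<exists>i>m. v \<in> level A V i"
  using level_above_if_leaves_remaining[OF assms(3)] remaining_card_eq_empty[OF assms(1,2)]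
  by blast

lemma level_Suc_Suc_has_arc:
  assumes "x \<in> level A V (Suc (Suc i))"
  shows "\<exists>w\<in>level A V (Suc i). A x w"
proof -
  have x_sink: "x \<in> sinks_in A (remaining A V (Suc i))"
    using assms by (simp add: level_def)
  then have "x \<in> remaining A V i" "x \<notin> sinks_in A (remaining A V i)"
    by (auto simp: sinks_in_def)
  then obtain w where "w \<in> remaining A V i" "A x w"
    by (auto simp: sinks_in_def)
  moreover have "w \<notin> remaining A V (Suc i)"
    using x_sink \<open>A x w\<close> by (auto simp: sinks_in_def)
  ultimately show ?thesis
    using level_Suc[of A V i] by blast
qed

lemma level_descending_walk:
  assumes "0 < i" "x \<in> level A V i"
  shows "\<exists>p. length p = i \<and> hd p = x \<and> last p \<in> level A V 1 \<and> set p \<subseteq> V \<and> successively A p"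
  using assms
proof (induction i arbitrary: x)
  case (Suc i)
  show ?case
  proof (cases "i = 0")
    case True
    moreover have "x \<in> V"
      using subsetD[OF level_subset Suc.prems(2)] .
    ultimately show ?thesis
      using Suc.prems by (intro exI[of _ "[x]"]) auto
  next
    case False
    then obtain k where k: "i = Suc k"
      using not0_implies_Suc by blast
    obtain w where w: "w \<in> level A V i" "A x w"
      using level_Suc_Suc_has_arc[of x A V k] Suc.prems(2) unfolding k by blast
    have "0 < i"
      using False by simp
    then obtain q where q: "length q = i" "hd q = w" "last q \<in> level A V 1" "set q \<subseteq> V"
      "successively A q"
      using Suc.IH w(1) by blast
    have "q \<noteq> []"
      using q(1) \<open>0 < i\<close> by auto
    then have "successively A (x # q)"
      using q(2,5) w(2) by (simp add: successively_Cons)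
    moreover have "x \<in> V"
      using subsetD[OF level_subset Suc.prems(2)] .
    ultimately show ?thesis
      using q \<open>q \<noteq> []\<close> by (intro exI[of _ "x # q"]) auto
  qed
qed simp

lemma Dc_walk_color_mod:
  assumes "successively (Dc_arc E \<chi> c) p" "j < length p"
  shows "c (p ! j) mod \<chi> = (c (hd p) + j) mod \<chi>"
  using assms(2)
proof (induction j)
  case 0
  then show ?case by (simp add: hd_conv_nth)
next
  case (Suc j)
  have "c (p ! Suc j) mod \<chi> = (c (p ! j) + 1) mod \<chi>"
    using successively_nth[OF assms(1) Suc.prems] by (simp add: Dc_arc_def)
  also have "\<dots> = (c (p ! j) mod \<chi> + 1) mod \<chi>"
    unfolding mod_add_left_eq ..
  also have "\<dots> = ((c (hd p) + j) mod \<chi> + 1) mod \<chi>"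
    using Suc by simp
  also have "\<dots> = (c (hd p) + Suc j) mod \<chi>"
    unfolding mod_add_left_eq by simp
  finally show ?case .
qed

lemma Dc_walk_distinct_colors:
  assumes "successively (Dc_arc E \<chi> c) p" "length p \<le> \<chi>"
  shows "distinct (map c p)"
  unfolding distinct_conv_nth
proof (intro allI impI)
  fix i j assume i: "i < length (map c p)" and j: "j < length (map c p)" and "i \<noteq> j"
  have "i < \<chi>" "j < \<chi>"
    using i j assms(2) by auto
  moreover have "(a + i) mod n = (a + j) mod n \<Longrightarrow> i < n \<Longrightarrow> j < n \<Longrightarrow> i = j" for a n :: nat
    by (metis cong_add_lcancel_nat cong_def cong_less_modulus_unique_nat)
  ultimately have "(c (hd p) + i) mod \<chi> \<noteq> (c (hd p) + j) mod \<chi>"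
    using \<open>i \<noteq> j\<close> by blast
  then show "map c p ! i \<noteq> map c p ! j"
    using i j Dc_walk_color_mod[OF assms(1), of i] Dc_walk_color_mod[OF assms(1), of j] by auto
qed

lemma colorful_path_from_Dc_walk:
  assumes "length p = \<chi>" "p \<noteq> []" "set p \<subseteq> V" "successively (Dc_arc E \<chi> c) p"
  shows "colorful_path_from V E \<chi> c (hd p) p"
proof -
  have "distinct (map c p)"
    using assms(1) by (intro Dc_walk_distinct_colors[OF assms(4)]) simp
  moreover from this have "distinct p"
    by (simp add: distinct_map)
  moreover have "successively E p"
    using assms(4) by (rule successively_mono) (simp add: Dc_arc_def)
  ultimately show ?thesis
    using assms unfolding colorful_path_from_def successively_conv_nth[symmetric] by simp
qed

lemma colorful_path_from_rev:
  assumes "\<And>u v. E u v \<Longrightarrow> E v u" "colorful_path_from V E \<chi> c x p"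
  shows "colorful_path_from V E \<chi> c (last p) (rev p)"
proof -
  have "successively E p"
    using assms(2) by (simp add: colorful_path_from_def successively_conv_nth)
  then have "successively (\<lambda>u v. E v u) p"
    by (rule successively_mono) (use assms(1) in blast)
  then have "successively E (rev p)"
    by simp
  then show ?thesis
    using assms(2) unfolding colorful_path_from_def successively_conv_nth[symmetric]
    by (simp add: hd_rev rev_map[symmetric])
qed

fun color_ladder :: "('a \<Rightarrow> 'a \<Rightarrow> bool) \<Rightarrow> 'a set \<Rightarrow> nat \<Rightarrow> ('a \<Rightarrow> nat) \<Rightarrow> nat \<Rightarrow> 'a set" where
  "color_ladder E V k c 0 = {v \<in> V. c v = k}"
| "color_ladder E V k c (Suc n) = {v \<in> V. c v = k - Suc n \<and> (\<exists>u\<in>color_ladder E V k c n. E v u)}"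

lemma color_ladder_color: "v \<in> color_ladder E V k c n \<Longrightarrow> v \<in> V \<and> c v = k - n"
  by (cases n) auto

lemma remaining_Suc_if_arc:
  "A v u \<Longrightarrow> u \<in> remaining A V n \<Longrightarrow> v \<in> V \<Longrightarrow> v \<in> remaining A V (Suc n)"
proof (induction n arbitrary: u)
  case (Suc n)
  then have "v \<in> remaining A V (Suc n)" by auto
  then show ?case
    using Suc.prems by (auto simp: sinks_in_def)
qed (auto simp: sinks_in_def)

lemma color_ladder_subset_remaining:
  assumes "proper_coloring V E k c"
  shows "color_ladder E V k c n \<subseteq> remaining (Dc_arc E k c) V n"
proof (induction n)
  case (Suc n)
  show ?case
  proof
    fix v assume "v \<in> color_ladder E V k c (Suc n)"
    then obtain u where v: "v \<in> V" "c v = k - Suc n" "u \<in> color_ladder E V k c n" "E v u"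
      by auto
    have "c v \<ge> 1"
      using assms v(1) by (auto simp: proper_coloring_def)
    moreover have "c u = k - n"
      using color_ladder_color[OF v(3)] by simp
    ultimately have "c u = c v + 1"
      using v(2) by arith
    then have "Dc_arc E k c v u"
      using v(4) by (simp add: Dc_arc_def)
    moreover have "u \<in> remaining (Dc_arc E k c) V n"
      using Suc.IH v(3) ..
    ultimately show "v \<in> remaining (Dc_arc E k c) V (Suc n)"
      using v(1) by (rule remaining_Suc_if_arc)
  qed
qed simp

text \<open>Vertices on a ladder drop their colour by one; if no ladder descends to colour 1, this frees
  colour \<open>k\<close>.\<close>
lemma proper_coloring_lower_ladders:
  assumes g: "graph V E" and pc: "proper_coloring V E k c"
    and no_full_ladder: "color_ladder E V k c (k - 1) = {}"
  shows "proper_coloring V E (k - 1) (\<lambda>v. if v \<in> color_ladder E V k c (k - c v) then c v - 1 else c v)"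
    (is "proper_coloring V E (k - 1) ?c'")
proof -
  let ?L = "\<lambda>v. v \<in> color_ladder E V k c (k - c v)"
  have range: "\<And>v. v \<in> V \<Longrightarrow> c v \<in> {1..k}"
    using pc by (simp add: proper_coloring_def)
  have sym: "\<And>u v. E u v \<Longrightarrow> E v u" and in_V: "\<And>u v. E u v \<Longrightarrow> u \<in> V \<and> v \<in> V"
    using g by (auto simp: graph_def)
  have lowered_ge_2: "c v \<ge> 2" if "v \<in> V" "?L v" for v
    using that range[OF that(1)] no_full_ladder by (cases "c v = 1") auto
  have no_collision: "c u - 1 \<noteq> c v" if "E u v" "?L u" "\<not> ?L v" for u v
  proof
    assume "c u - 1 = c v"
    moreover have "c u \<ge> 2" "c u \<le> k"
      using lowered_ge_2 range in_V that by auto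
    ultimately have "k - c v = Suc (k - c u)" and "v \<in> color_ladder E V k c (Suc (k - c u))"
      using in_V[OF that(1)] that(2) sym[OF that(1)] by auto
    then show False
      using that(3) by simp
  qed
  show ?thesis
    unfolding proper_coloring_def
  proof (intro conjI ballI allI impI)
    fix v assume "v \<in> V"
    show "?c' v \<in> {1..k - 1}"
    proof (cases "?L v")
      case True
      then show ?thesis
        using lowered_ge_2[OF \<open>v \<in> V\<close>] range[OF \<open>v \<in> V\<close>] by auto
    next
      case False
      then have "c v \<noteq> k"
        using \<open>v \<in> V\<close> by auto
      then show ?thesis
        using False range[OF \<open>v \<in> V\<close>] by auto
    qed
  next
    fix u v assume e: "E u v"
    have "c u \<noteq> c v"
      using pc e by (simp add: proper_coloring_def)
    moreover have "?L u \<Longrightarrow> c u \<ge> 2" "?L v \<Longrightarrow> c v \<ge> 2"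
      using lowered_ge_2 in_V[OF e] by auto
    ultimately show "?c' u \<noteq> ?c' v"
      using no_collision[OF e] no_collision[OF sym[OF e]] by auto
  qed
qed

lemma not_proper_coloring_below_chromatic_number:
  "k < chromatic_number V E \<Longrightarrow> \<not> proper_coloring V E k c"
  unfolding chromatic_number_def by (blast dest: not_less_Least)

lemma colorful_path_from_high_level:
  assumes "0 < \<chi>" "\<chi> \<le> i" "x \<in> level (Dc_arc E \<chi> c) V i"
  shows "\<exists>p. colorful_path_from V E \<chi> c x p"
proof -
  obtain p where p: "length p = i" "hd p = x" "set p \<subseteq> V" "successively (Dc_arc E \<chi> c) p"
    using level_descending_walk assms by (metis less_le_trans)
  have "successively (Dc_arc E \<chi> c) (take \<chi> p)"
    using p(4) by (simp add: successively_conv_nth)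
  then have "colorful_path_from V E \<chi> c (hd (take \<chi> p)) (take \<chi> p)"
    using p assms by (intro colorful_path_from_Dc_walk) (auto dest: in_set_takeD)
  moreover have "hd (take \<chi> p) = x"
    using p assms by (metis hd_take less_le_trans list.size(3) not_less_zero)
  ultimately show ?thesis by blast
qed

lemma colorful_path_from_unique_sink:
  assumes "graph V E" "V \<noteq> {}" "\<chi> = chromatic_number V E" "nice_coloring V E \<chi> c"
    and sink: "sinks_in (Dc_arc E \<chi> c) V = {x}"
  shows "\<exists>p. colorful_path_from V E \<chi> c x p"
proof -
  have pc: "proper_coloring V E \<chi> c"
    and acyc: "acyclic {(a, b). a \<in> V \<and> b \<in> V \<and> Dc_arc E \<chi> c a b}"
    using assms(4) by (auto simp: nice_coloring_def)
  have "finite V" and sym: "\<And>u v. E u v \<Longrightarrow> E v u"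
    using assms(1) by (auto simp: graph_def)
  have "0 < \<chi>"
    using pc assms(2) unfolding proper_coloring_def by fastforce
  then have no_smaller: "\<not> proper_coloring V E (\<chi> - 1) c'" for c'
    using assms(3) not_proper_coloring_below_chromatic_number[of "\<chi> - 1" V E] by simp
  have "color_ladder E V \<chi> c (\<chi> - 1) \<noteq> {}"
    using proper_coloring_lower_ladders[OF assms(1) pc] no_smaller by metis
  then obtain v where "v \<in> color_ladder E V \<chi> c (\<chi> - 1)"
    by blast
  then have "v \<in> remaining (Dc_arc E \<chi> c) V (\<chi> - 1)"
    using color_ladder_subset_remaining[OF pc] ..
  then obtain j where "\<chi> - 1 < j" and v_level: "v \<in> level (Dc_arc E \<chi> c) V j"
    using level_above_if_remaining[OF \<open>finite V\<close> acyc] by blast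
  have "0 < j" "\<chi> \<le> j"
    using \<open>\<chi> - 1 < j\<close> \<open>0 < \<chi>\<close> by auto
  then obtain p where p: "length p = j" "last p \<in> level (Dc_arc E \<chi> c) V 1" "set p \<subseteq> V"
    "successively (Dc_arc E \<chi> c) p"
    using level_descending_walk[OF _ v_level] by blast
  define q where "q = drop (j - \<chi>) p"
  have "length q = \<chi>" "q \<noteq> []" "set q \<subseteq> V"
    using p(1,3) \<open>\<chi> \<le> j\<close> \<open>0 < \<chi>\<close> by (auto simp: q_def dest: in_set_dropD)
  moreover have "successively (Dc_arc E \<chi> c) q"
    using p(4) by (simp add: q_def successively_conv_nth)
  ultimately have "colorful_path_from V E \<chi> c (hd q) q"
    by (rule colorful_path_from_Dc_walk)
  with sym have "colorful_path_from V E \<chi> c (last q) (rev q)"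
    by (rule colorful_path_from_rev)
  moreover have "last q = x"
    using p(1,2) sink \<open>0 < \<chi>\<close> \<open>\<chi> \<le> j\<close> by (simp add: q_def last_drop level_def)
  ultimately show ?thesis by blast
qed

theorem lemma7:
  fixes V :: "'a set" and E :: "'a \<Rightarrow> 'a \<Rightarrow> bool" and c :: "'a \<Rightarrow> nat" and \<chi> :: nat
  assumes "connected_graph V E"
    and "\<chi> = chromatic_number V E"
    and "nice_coloring V E \<chi> c"
  shows "{x \<in> V. \<not> (\<exists>p. colorful_path_from V E \<chi> c x p)}
           \<subseteq> (\<Union>i\<in>{2..\<chi> - 1}. level (Dc_arc E \<chi> c) V i)"
proof
  fix x assume "x \<in> {x \<in> V. \<not> (\<exists>p. colorful_path_from V E \<chi> c x p)}"
  then have "x \<in> V" and no_path: "\<nexists>p. colorful_path_from V E \<chi> c x p" by auto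
  have g: "graph V E" and "V \<noteq> {}" and "finite V"
    using assms(1) by (auto simp: connected_graph_def graph_def)
  have "0 < \<chi>"
    using assms(3) \<open>x \<in> V\<close> by (fastforce simp: nice_coloring_def proper_coloring_def)
  have "acyclic {(a, b). a \<in> V \<and> b \<in> V \<and> Dc_arc E \<chi> c a b}"
    and "card (sinks_in (Dc_arc E \<chi> c) V) = 1"
    using assms(3) by (simp_all add: nice_coloring_def)
  from level_above_if_remaining[OF \<open>finite V\<close> this(1), where v = x and m = 0]
  obtain i where "0 < i" and x_level: "x \<in> level (Dc_arc E \<chi> c) V i"
    using \<open>x \<in> V\<close> by auto
  have "i < \<chi>"
  proof (rule ccontr)
    assume "\<not> i < \<chi>"
    then show False
      using colorful_path_from_high_level[OF \<open>0 < \<chi>\<close> _ x_level] no_path by simp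
  qed
  moreover have "i \<noteq> 1"
  proof
    assume "i = 1"
    then have "x \<in> sinks_in (Dc_arc E \<chi> c) V"
      using x_level by (simp add: level_def)
    then have "sinks_in (Dc_arc E \<chi> c) V = {x}"
      using \<open>card (sinks_in (Dc_arc E \<chi> c) V) = 1\<close> by (metis card_1_singletonE singletonD)
    then show False
      using colorful_path_from_unique_sink[OF g \<open>V \<noteq> {}\<close> assms(2,3)] no_path by blast
  qed
  ultimately show "x \<in> (\<Union>i\<in>{2..\<chi> - 1}. level (Dc_arc E \<chi> c) V i)"
    using \<open>0 < i\<close> x_level by auto
qed

end
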